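(* For all integers $m,n\ge 1$, $$P_{m-1} (n P_{n-1}-n P_{n}+P_{n})+P_{m} ((n+1) P_{n-1}+ 2 n P_{n}-(n-1) P_{n+1})+P_{m+1} ((n+1) P_{n}+n P_{n+1})= n (P_{m+n-1}+P_{m+n+1})+2 P_{m+n},$$ where $P_k$ denotes the $k$-th Pell number.
   Context: The Pell numbers are defined by $P_0=0$, $P_1=1$, $P_k=2P_{k-1}+P_{k-2}$ for $k\ge 2$. *)

theory Defs
  imports Main
begin

fun pell :: "nat \<Rightarrow> int" where
  "pell 0 = 0"
| "pell (Suc 0) = 1"
| "pell (Suc (Suc k)) = 2 * pell (Suc k) + pell k"

end

theory Submission
  imports Defs
begin

(* Writing m = a + 1 and n = b + 1, the addition formula
   P (a + b + 1) = P (a + 1) P (b + 1) + P a P b, together with the recurrence,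
   expresses every Pell number in the identity through P a, P (a + 1), P b, P (b + 1);
   both sides then agree as polynomials in these four values and n. *)

lemma pell_add: "pell (m + n + 1) = pell (m + 1) * pell (n + 1) + pell m * pell n"
proof (induction n arbitrary: m)
  case 0
  then show ?case by simp
next
  case (Suc n)
  have "pell (m + Suc n + 1) = pell (m + 1 + n + 1)"
    by simp
  also have "\<dots> = pell (m + 2) * pell (n + 1) + pell (m + 1) * pell n"
    using Suc.IH[of "m + 1"] by (simp add: numeral_2_eq_2)
  also have "\<dots> = pell (m + 1) * pell (Suc n + 1) + pell m * pell (Suc n)"
    by (simp add: numeral_2_eq_2 algebra_simps)
  finally show ?case .
qed

theorem proposition7p5:
  fixes m n :: nat
  assumes "m \<ge> 1" and "n \<ge> 1"
  shows "pell (m - 1) * (int n * pell (n - 1) - int n * pell n + pell n)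
       + pell m * ((int n + 1) * pell (n - 1) + 2 * int n * pell n - (int n - 1) * pell (n + 1))
       + pell (m + 1) * ((int n + 1) * pell n + int n * pell (n + 1))
       = int n * (pell (m + n - 1) + pell (m + n + 1)) + 2 * pell (m + n)"
proof -
  obtain a b where m: "m = a + 1" and n: "n = b + 1"
    using assms by (metis add.commute le_add_diff_inverse)
  have pell_step: "pell (k + 2) = 2 * pell (k + 1) + pell k" for k
    by (simp add: numeral_2_eq_2)
  have "pell (m + n - 1) = pell (a + 1) * pell (b + 1) + pell a * pell b"
    using pell_add[of a b] by (simp add: m n)
  moreover have "pell (m + n) = pell (a + 1) * (2 * pell (b + 1) + pell b) + pell a * pell (b + 1)"
    using pell_add[of a "b + 1"] pell_step[of b] by (simp add: m n)
  moreover have "pell (m + n + 1) =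
      (2 * pell (a + 1) + pell a) * (2 * pell (b + 1) + pell b) + pell (a + 1) * pell (b + 1)"
    using pell_add[of "a + 1" "b + 1"] pell_step[of a] pell_step[of b] by (simp add: m n)
  moreover have "pell (m + 1) = 2 * pell (a + 1) + pell a" "pell (n + 1) = 2 * pell (b + 1) + pell b"
    using pell_step by (simp_all add: m n)
  ultimately show ?thesis
    by (simp only: m n diff_add_inverse2) (simp add: algebra_simps)
qed

end
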